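(* Let $m,n,p$ be positive integers, $R$ a real $m\times n$ matrix, $K$ a real $p\times n$ matrix and $v\in\mathbb{R}^n$, and assume $\{y\in\mathbb{R}^n:Ky\ge0,\ Ry=0,\ v\cdot y\le0\}=\{0\}$. Let $\pi\in\mathbb{R}^m$ and $\kappa\in\mathbb{R}^p$ satisfy $v'=\pi'R+\kappa'K$. Let $\mathcal{M}=\{a\in\mathbb{R}^m:a'R=b'K\text{ for some }b\in\mathbb{R}^p\}$, suppose $d=\dim\mathcal{M}>0$, let $M$ be a $d\times m$ matrix whose rows form a basis of $\mathcal{M}$, and let $G$ be a $d\times p$ matrix with $MR=GK$. Let $\mathcal{U}=\mathcal{K}\cap\mathbb{R}^p_+$, where $\mathcal{K}$ is the range of $K$. Then $\{u\in\mathcal{U}:Gu=0\text{ and }\kappa\cdot u\le0\}=\{0\}$.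
   Context: Vector inequalities such as $Ky\ge0$ are componentwise; $\mathbb{R}^p_+$ is the nonnegative orthant. *)

theory Defs
  imports "HOL-Analysis.Analysis"
begin

end

theory Submission
  imports Defs
begin

text \<open>If \<open>u = K x\<close> is nonnegative with \<open>G u = 0\<close> and \<open>\<kappa> \<bullet> u \<le> 0\<close>, then \<open>w = R x\<close> satisfies
  \<open>M w = G K x = 0\<close>, i.e. \<open>w\<close> is orthogonal to \<open>\<M>\<close>. Now \<open>\<M>\<close> is exactly the orthogonal
  complement of \<open>R (ker K)\<close>, so \<open>w = R z\<close> with \<open>K z = 0\<close>. Then \<open>y = x - z\<close> has \<open>K y = u \<ge> 0\<close>,
  \<open>R y = 0\<close> and \<open>v \<bullet> y = \<kappa> \<bullet> u \<le> 0\<close>, so \<open>y = 0\<close> and \<open>u = 0\<close>.\<close>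

lemma orthogonal_comp_range_vector_matrix:
  fixes K :: "real^'n^'p"
  shows "(range (\<lambda>b. b v* K))\<^sup>\<bottom> = {y. K *v y = 0}"
proof -
  have "(\<forall>b. (b v* K) \<bullet> y = 0) \<longleftrightarrow> K *v y = 0" for y
  proof
    assume "\<forall>b. (b v* K) \<bullet> y = 0"
    then have "(K *v y) \<bullet> (K *v y) = 0"
      by (simp only: dot_lmul_matrix[symmetric])
    then show "K *v y = 0"
      by simp
  qed (simp add: dot_lmul_matrix)
  then show ?thesis
    by (auto simp: orthogonal_comp_def orthogonal_def)
qed

lemma range_vector_matrix_eq_orthogonal_comp_kernel:
  fixes K :: "real^'n^'p"
  shows "range (\<lambda>b. b v* K) = {y. K *v y = 0}\<^sup>\<bottom>"
proof -
  have "subspace (range (\<lambda>b. b v* K))"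
    using linear_subspace_image[OF matrix_vector_mul_linear[of "transpose K"] subspace_UNIV] by simp
  then have "(range (\<lambda>b. b v* K))\<^sup>\<bottom>\<^sup>\<bottom> = range (\<lambda>b. b v* K)"
    by (rule orthogonal_comp_self)
  then show ?thesis
    by (simp only: orthogonal_comp_range_vector_matrix)
qed

lemma vector_matrix_preimage_eq_orthogonal_comp_image_kernel:
  fixes R :: "real^'n^'m" and K :: "real^'n^'p"
  shows "{a. \<exists>b. a v* R = b v* K} = ((\<lambda>z. R *v z) ` {z. K *v z = 0})\<^sup>\<bottom>"
proof -
  have "{a. \<exists>b. a v* R = b v* K} = {a. a v* R \<in> range (\<lambda>b. b v* K)}"
    by blast
  also have "\<dots> = {a. a v* R \<in> {y. K *v y = 0}\<^sup>\<bottom>}"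
    by (simp only: range_vector_matrix_eq_orthogonal_comp_kernel)
  also have "\<dots> = ((\<lambda>z. R *v z) ` {z. K *v z = 0})\<^sup>\<bottom>"
  proof -
    have "z \<bullet> (a v* R) = (R *v z) \<bullet> a" for a z
      using dot_lmul_matrix[of a R z] by (simp only: inner_commute)
    then show ?thesis
      by (auto simp: orthogonal_comp_def orthogonal_def)
  qed
  finally show ?thesis .
qed

lemma orthogonal_comp_vector_matrix_preimage:
  fixes R :: "real^'n^'m" and K :: "real^'n^'p"
  shows "{a. \<exists>b. a v* R = b v* K}\<^sup>\<bottom> = (\<lambda>z. R *v z) ` {z. K *v z = 0}"
proof -
  have "subspace {z. K *v z = 0}"
    using linear_subspace_kernel[OF matrix_vector_mul_linear[of K]] by simp
  then have "subspace ((\<lambda>z. R *v z) ` {z. K *v z = 0})"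
    by (rule linear_subspace_image[OF matrix_vector_mul_linear])
  then show ?thesis
    unfolding vector_matrix_preimage_eq_orthogonal_comp_image_kernel by (rule orthogonal_comp_self)
qed

lemma matrix_vector_mult_eq_0_imp_orthogonal_comp_rows:
  fixes M :: "real^'m^'d"
  assumes "M *v w = 0"
  shows "w \<in> (span (range (\<lambda>i. row i M)))\<^sup>\<bottom>"
proof -
  have rows: "orthogonal (row i M) w" for i
    using arg_cong[OF assms, of "\<lambda>x. x $ i"]
    by (simp add: orthogonal_def matrix_vector_mult_def inner_vec_def row_def mult.commute)
  have "orthogonal a w" if "a \<in> span (range (\<lambda>i. row i M))" for a
  proof -
    have "orthogonal w a"
      by (rule orthogonal_to_span[OF that]) (auto simp: orthogonal_commute[of w] rows)
    then show ?thesis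
      by (simp add: orthogonal_commute)
  qed
  then show ?thesis
    by (simp add: orthogonal_comp_def)
qed

theorem lemma3p1:
  fixes R :: "real^'n^'m" and K :: "real^'n^'p" and v :: "real^'n"
    and \<pi> :: "real^'m" and \<kappa> :: "real^'p"
    and M :: "real^'m^'d" and G :: "real^'p^'d"
  assumes hyp: "{y. (\<forall>i. 0 \<le> (K *v y) $ i) \<and> R *v y = 0 \<and> v \<bullet> y \<le> 0} = {0}"
    and v_eq: "v = \<pi> v* R + \<kappa> v* K"
    and d_pos: "dim {a :: real^'m. \<exists>b. a v* R = b v* K} > 0"
    and d_eq: "CARD('d) = dim {a :: real^'m. \<exists>b. a v* R = b v* K}"
    and M_inj: "inj (\<lambda>i. row i M)"
    and M_indep: "independent (range (\<lambda>i. row i M))"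
    and M_span: "span (range (\<lambda>i. row i M)) = {a :: real^'m. \<exists>b. a v* R = b v* K}"
    and MG: "M ** R = G ** K"
  shows "{u \<in> range (\<lambda>x. K *v x) \<inter> {u. \<forall>i. 0 \<le> u $ i}. G *v u = 0 \<and> \<kappa> \<bullet> u \<le> 0} = {0}"
proof
  show "{0} \<subseteq> {u \<in> range (\<lambda>x. K *v x) \<inter> {u. \<forall>i. 0 \<le> u $ i}. G *v u = 0 \<and> \<kappa> \<bullet> u \<le> 0}"
    by (auto intro!: range_eqI[where x = 0])
next
  show "{u \<in> range (\<lambda>x. K *v x) \<inter> {u. \<forall>i. 0 \<le> u $ i}. G *v u = 0 \<and> \<kappa> \<bullet> u \<le> 0} \<subseteq> {0}"
  proof
    fix u
    assume "u \<in> {u \<in> range (\<lambda>x. K *v x) \<inter> {u. \<forall>i. 0 \<le> u $ i}. G *v u = 0 \<and> \<kappa> \<bullet> u \<le> 0}"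
    then obtain x where u: "u = K *v x" and u_nonneg: "\<forall>i. 0 \<le> u $ i"
      and Gu: "G *v u = 0" and \<kappa>u: "\<kappa> \<bullet> u \<le> 0"
      by auto
    have "M *v (R *v x) = 0"
      using Gu by (simp add: u matrix_vector_mul_assoc MG)
    then have "R *v x \<in> (span (range (\<lambda>i. row i M)))\<^sup>\<bottom>"
      by (rule matrix_vector_mult_eq_0_imp_orthogonal_comp_rows)
    then have "R *v x \<in> (\<lambda>z. R *v z) ` {z. K *v z = 0}"
      by (simp only: M_span orthogonal_comp_vector_matrix_preimage)
    then obtain z where Rz: "R *v z = R *v x" and Kz: "K *v z = 0"
      by auto
    define y where "y = x - z"
    have Ky: "K *v y = u" and Ry: "R *v y = 0"
      using Rz Kz by (simp_all add: y_def u matrix_vector_mult_diff_distrib)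
    have "v \<bullet> y = \<kappa> \<bullet> u"
      by (simp add: v_eq inner_add_left dot_lmul_matrix Ky Ry)
    then have "y \<in> {y. (\<forall>i. 0 \<le> (K *v y) $ i) \<and> R *v y = 0 \<and> v \<bullet> y \<le> 0}"
      using Ky Ry u_nonneg \<kappa>u by simp
    then have "y = 0"
      using hyp by blast
    then show "u \<in> {0}"
      using Ky by simp
  qed
qed

end
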